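(* Let $V$ be a vertex algebra over a field $k$ of characteristic $0$ with translation operator $T$, and let $f\in k((x))$. Then for all $a,b\in V$, $$a_{(f(x))}b+b_{(f(-x))}a=\sum_{j\in\mathbb{Z}_+}\frac{(-1)^j}{(j+1)!}\,T^{j+1}\bigl(a_{(x^{j+1}f(x))}b\bigr).$$
   Context: For a vertex algebra $V$ with $n$-th products $a(n)b$ (so that $a(n)b=0$ for $n\gg0$), write $a(z)b=\sum_{n\in\mathbb{Z}}a(n)b\,z^{-n-1}\in V((z))$. For a Laurent series $f\in k((x))$ the $f$-product is $a_{(f)}b=\operatorname{res}_z f(z)a(z)b$, the coefficient of $z^{-1}$ in $f(z)a(z)b$; notation such as $a_{(x^{j}f(x))}b$ means the $f$-product with the series $x^jf(x)$. The translation operator is $Ta=a(-2)\mathbf{1}$. The sum on the right is finite. *)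

theory Defs
  imports Main "HOL-Computational_Algebra.Formal_Laurent_Series"
begin

definition fsum :: "('i \<Rightarrow> 'v::comm_monoid_add) \<Rightarrow> 'v" where
  "fsum g = sum g {i. g i \<noteq> 0}"

text \<open>Vertex algebra over the field 'k: a 'k-vector space 'v (scalar multiplication scale),
  bilinear n-th products nprod n a b = a(n)b for n in Z, vacuum vac, with
  truncation, vacuum axioms and the Borcherds identity.\<close>
definition vertex_algebra ::
  "('k::field_char_0 \<Rightarrow> 'v::ab_group_add \<Rightarrow> 'v) \<Rightarrow> (int \<Rightarrow> 'v \<Rightarrow> 'v \<Rightarrow> 'v) \<Rightarrow> 'v \<Rightarrow> bool" where
  "vertex_algebra scale nprod vac \<longleftrightarrow>
     Vector_Spaces.vector_space scale \<and>
     (\<forall>n a. Vector_Spaces.linear scale scale (\<lambda>b. nprod n a b)) \<and>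
     (\<forall>n b. Vector_Spaces.linear scale scale (\<lambda>a. nprod n a b)) \<and>
     (\<forall>a b. \<exists>N. \<forall>n\<ge>N. nprod n a b = 0) \<and>
     (\<forall>n a. nprod n vac a = (if n = -1 then a else 0)) \<and>
     (\<forall>n a. n \<ge> 0 \<longrightarrow> nprod n a vac = 0) \<and>
     (\<forall>a. nprod (-1) a vac = a) \<and>
     (\<forall>a b c m n k.
        fsum (\<lambda>j::nat. scale ((of_int m :: 'k) gchoose j)
                 (nprod (m + k - int j) (nprod (n + int j) a b) c))
      = fsum (\<lambda>j::nat. scale ((-1) ^ j * ((of_int n :: 'k) gchoose j))
                 (nprod (m + n - int j) a (nprod (k + int j) b c)
                  - scale ((-1) powi n) (nprod (n + k - int j) b (nprod (m + int j) a c)))))"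

definition transl :: "(int \<Rightarrow> 'v \<Rightarrow> 'v \<Rightarrow> 'v) \<Rightarrow> 'v \<Rightarrow> 'v \<Rightarrow> 'v" where
  "transl nprod vac a = nprod (-2) a vac"

text \<open>f-product: a_(f) b = res_z f(z) a(z)b = sum over i of f_i a(i)b, where f = sum_i f_i z^i
  and a(z)b = sum_n a(n)b z^(-n-1).\<close>
definition fprod :: "('k::field_char_0 \<Rightarrow> 'v::ab_group_add \<Rightarrow> 'v) \<Rightarrow> (int \<Rightarrow> 'v \<Rightarrow> 'v \<Rightarrow> 'v)
     \<Rightarrow> 'k fls \<Rightarrow> 'v \<Rightarrow> 'v \<Rightarrow> 'v" where
  "fprod scale nprod f a b = fsum (\<lambda>i::int. scale (fls_nth f i) (nprod i a b))"

end

theory Submission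
  imports Defs
begin

text \<open>Borcherds' identity with \<open>c = \<one>\<close>, \<open>m = k = -1\<close> and \<open>n\<close> replaced by \<open>n + 1\<close> is skew symmetry
  \<open>a(n)b + (-1)\<^sup>n b(n)a = \<Sum>\<^sub>j (-1)\<^sup>j/(j+1)! T\<^sup>j\<^sup>+\<^sup>1(a(n+1+j)b)\<close>, once one knows
  \<open>x(-1-j)\<one> = T\<^sup>j x / j!\<close>. The latter follows by induction on \<open>j\<close> from the instance
  \<open>b = c = \<one>\<close>, \<open>k = -1\<close>, \<open>n = -2\<close> of Borcherds' identity, which reads \<open>(Tx)(m-1)\<one> = (1-m) x(m-2)\<one>\<close>.
  The \<open>f\<close>-product identity is the combination of skew symmetry with the coefficients of \<open>f\<close>;
  all sums involved are finite because \<open>f\<close> has a lowest degree and \<open>a(n)b\<close>, \<open>b(n)a\<close> vanish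
  for large \<open>n\<close>.\<close>

lemma fsum_eq_sum:
  assumes "finite S" "\<And>i. i \<notin> S \<Longrightarrow> g i = 0"
  shows "fsum g = sum g S"
  unfolding fsum_def using assms by (intro sum.mono_neutral_left) auto

lemma fsum_shift:
  fixes g :: "int \<Rightarrow> 'v::comm_monoid_add"
  shows "fsum (\<lambda>i. g (i + k)) = fsum g"
proof -
  have "{i. g (i + k) \<noteq> 0} = (\<lambda>i. i - k) ` {i. g i \<noteq> 0}"
    by (auto simp: image_iff intro!: exI[of _ "_ + k"])
  moreover have "inj_on (\<lambda>i::int. i - k) A" for A
    by (auto simp: inj_on_def)
  ultimately show ?thesis
    unfolding fsum_def by (simp add: sum.reindex o_def)
qed

lemma fls_nth_compose_neg_X:
  fixes f :: "'k::field fls"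
  shows "fls_nth (fls_compose_fps f (- fps_X)) i = fls_nth f i * (-1) powi i"
proof -
  have neg_X: "fps_const (-1 :: 'k) * fps_X = - fps_X"
    by (simp add: fps_const_neg fps_const_1_eq_1)
  show ?thesis
    using fls_nth_fls_compose_fps_linear[of "-1" f i] unfolding neg_X by simp
qed

lemma fprod_X_power_times:
  "fprod scale nprod (fls_X ^ m * f) a b = fsum (\<lambda>i. scale (fls_nth f i) (nprod (i + int m) a b))"
  unfolding fprod_def fls_X_power_times_conv_shift(1)
  using fsum_shift[of "\<lambda>i. scale (fls_nth f (i - int m)) (nprod i a b)" "int m"]
  by simp

locale vertex_alg =
  fixes scale :: "'k::field_char_0 \<Rightarrow> 'v::ab_group_add \<Rightarrow> 'v"
    and nprod :: "int \<Rightarrow> 'v \<Rightarrow> 'v \<Rightarrow> 'v"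
    and vac :: 'v
  assumes vertex_algebra: "vertex_algebra scale nprod vac"
begin

sublocale vector_space scale
  using vertex_algebra unfolding vertex_algebra_def by blast

lemma nprod_linear_left: "Vector_Spaces.linear scale scale (\<lambda>a. nprod n a b)"
  and nprod_linear_right: "Vector_Spaces.linear scale scale (\<lambda>b. nprod n a b)"
  and nprod_truncation: "\<exists>N. \<forall>n\<ge>N. nprod n a b = 0"
  and vacuum_nprod: "nprod n vac a = (if n = -1 then a else 0)"
  and nprod_vacuum_nonneg: "n \<ge> 0 \<Longrightarrow> nprod n a vac = 0"
  and nprod_vacuum_minus_one: "nprod (-1) a vac = a"
  and borcherds:
    "fsum (\<lambda>j::nat. scale ((of_int m :: 'k) gchoose j)
        (nprod (m + k - int j) (nprod (n + int j) a b) c))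
   = fsum (\<lambda>j::nat. scale ((-1) ^ j * ((of_int n :: 'k) gchoose j))
        (nprod (m + n - int j) a (nprod (k + int j) b c)
         - scale ((-1) powi n) (nprod (n + k - int j) b (nprod (m + int j) a c))))"
  using vertex_algebra unfolding vertex_algebra_def by blast+

lemma nprod_zero_left [simp]: "nprod n 0 b = 0"
proof -
  interpret Vector_Spaces.linear scale scale "\<lambda>a. nprod n a b"
    by (rule nprod_linear_left)
  show ?thesis by (rule zero)
qed

lemma nprod_zero_right [simp]: "nprod n a 0 = 0"
proof -
  interpret Vector_Spaces.linear scale scale "\<lambda>b. nprod n a b"
    by (rule nprod_linear_right)
  show ?thesis by (rule zero)
qed

abbreviation T :: "'v \<Rightarrow> 'v" where
  "T \<equiv> transl nprod vac"

lemma linear_T_power: "Vector_Spaces.linear scale scale (T ^^ k)"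
proof (induction k)
  case 0
  show ?case using linear_id by (simp add: id_def)
next
  case (Suc k)
  have "Vector_Spaces.linear scale scale T"
    unfolding transl_def[abs_def] by (rule nprod_linear_left)
  with Suc show ?case
    unfolding funpow.simps(2) by (rule Vector_Spaces.linear_compose)
qed

lemma T_zero [simp]: "T 0 = 0"
  by (simp add: transl_def)

lemma T_power_zero [simp]: "(T ^^ k) 0 = 0"
  and T_power_sum: "(T ^^ k) (sum g S) = (\<Sum>i\<in>S. (T ^^ k) (g i))"
  and T_power_scale: "(T ^^ k) (scale c x) = scale c ((T ^^ k) x)"
proof -
  interpret Vector_Spaces.linear scale scale "T ^^ k"
    by (rule linear_T_power)
  show "(T ^^ k) 0 = 0" by (rule zero)
  show "(T ^^ k) (sum g S) = (\<Sum>i\<in>S. (T ^^ k) (g i))" by (rule sum)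
  show "(T ^^ k) (scale c x) = scale c ((T ^^ k) x)" by (rule scale)
qed

lemma T_nprod_vacuum:
  "nprod (m - 1) (T x) vac = scale (1 - of_int m) (nprod (m - 2) x vac)"
proof -
  have lhs: "fsum (\<lambda>j::nat. scale ((of_int m :: 'k) gchoose j)
          (nprod (m + -1 - int j) (nprod (-2 + int j) x vac) vac))
      = nprod (m - 1) (T x) vac + scale (of_int m) (nprod (m - 2) x vac)"
    by (subst fsum_eq_sum[where S = "{0, 1}"])
       (auto simp: transl_def nprod_vacuum_nonneg nprod_vacuum_minus_one)
  have rhs: "fsum (\<lambda>j::nat. scale ((-1) ^ j * ((of_int (-2) :: 'k) gchoose j))
          (nprod (m + -2 - int j) x (nprod (-1 + int j) vac vac)
           - scale ((-1) powi (-2)) (nprod (-2 + -1 - int j) vac (nprod (m + int j) x vac))))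
      = nprod (m - 2) x vac"
    by (subst fsum_eq_sum[where S = "{0}"]) (auto simp: vacuum_nprod)
  have "nprod (m - 1) (T x) vac + scale (of_int m) (nprod (m - 2) x vac) = nprod (m - 2) x vac"
    using borcherds[of m "-1" "-2" x vac vac] lhs rhs by simp
  then show ?thesis
    by (simp add: scale_left_diff_distrib eq_diff_eq)
qed

lemma nprod_vacuum_eq_T_power:
  "nprod (- int j - 1) x vac = scale (1 / fact j) ((T ^^ j) x)"
proof (induction j arbitrary: x)
  case 0
  show ?case by (simp add: nprod_vacuum_minus_one)
next
  case (Suc j)
  have nonzero: "(1 + of_nat j :: 'k) \<noteq> 0"
    by (metis of_nat_Suc of_nat_eq_0_iff nat.distinct(1))
  have "nprod (- int (Suc j) - 1) x vac = nprod (- int j - 2) x vac"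
    by (simp add: algebra_simps)
  also have "\<dots> = scale (1 / (1 + of_nat j)) (scale (1 + of_nat j) (nprod (- int j - 2) x vac))"
    using nonzero by simp
  also have "\<dots> = scale (1 / (1 + of_nat j)) (nprod (- int j - 1) (T x) vac)"
    using T_nprod_vacuum[of "- int j" x] by simp
  also have "\<dots> = scale (1 / fact (Suc j)) ((T ^^ Suc j) x)"
    by (simp add: Suc.IH funpow_swap1 field_simps)
  finally show ?case .
qed

lemma skew_symmetry:
  "nprod n a b + scale ((-1) powi n) (nprod n b a)
   = fsum (\<lambda>j::nat. scale ((-1) ^ j / fact (j + 1)) ((T ^^ (j + 1)) (nprod (n + 1 + int j) a b)))"
proof -
  have lhs: "scale ((of_int (-1) :: 'k) gchoose j)
                 (nprod (-1 + -1 - int j) (nprod (n + 1 + int j) a b) vac)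
       = scale ((-1) ^ j / fact (j + 1)) ((T ^^ (j + 1)) (nprod (n + 1 + int j) a b))" for j
  proof -
    have "((-1::'k) gchoose j) = (-1) ^ j"
      using gbinomial_minus[of "1::'k" j] by (simp add: binomial_gbinomial[symmetric])
    moreover have "-1 + -1 - int j = - int (j + 1) - 1"
      by simp
    then have "nprod (-1 + -1 - int j) (nprod (n + 1 + int j) a b) vac
        = scale (1 / fact (j + 1)) ((T ^^ (j + 1)) (nprod (n + 1 + int j) a b))"
      by (simp only: nprod_vacuum_eq_T_power)
    ultimately show ?thesis by simp
  qed
  have rhs: "fsum (\<lambda>j::nat. scale ((-1) ^ j * ((of_int (n + 1) :: 'k) gchoose j))
          (nprod (-1 + (n + 1) - int j) a (nprod (-1 + int j) b vac)
           - scale ((-1) powi (n + 1)) (nprod (n + 1 + -1 - int j) b (nprod (-1 + int j) a vac))))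
      = nprod n a b + scale ((-1) powi n) (nprod n b a)"
    by (subst fsum_eq_sum[where S = "{0}"])
       (auto simp: nprod_vacuum_nonneg nprod_vacuum_minus_one scale_minus_left power_int_add)
  show ?thesis
    using borcherds[of "-1" "-1" "n + 1" a b vac] lhs rhs by simp
qed

lemma fprod_eq_sum:
  assumes "finite I" "\<And>i. i \<notin> I \<Longrightarrow> fls_nth f i = 0 \<or> nprod i a b = 0"
  shows "fprod scale nprod f a b = (\<Sum>i\<in>I. scale (fls_nth f i) (nprod i a b))"
  unfolding fprod_def using assms by (intro fsum_eq_sum) auto

lemma fprod_skew_symmetry:
  "fprod scale nprod f a b + fprod scale nprod (fls_compose_fps f (- fps_X)) b a
   = fsum (\<lambda>j::nat. scale ((-1) ^ j / fact (j + 1))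
       ((T ^^ (j + 1)) (fprod scale nprod (fls_X ^ (j + 1) * f) a b)))"
proof -
  define d where "d = fls_subdegree f"
  define s :: "nat \<Rightarrow> 'k" where "s j = (-1) ^ j / fact (j + 1)" for j
  obtain N where ab: "\<And>n. n > N \<Longrightarrow> nprod n a b = 0"
             and ba: "\<And>n. n > N \<Longrightarrow> nprod n b a = 0"
    using nprod_truncation[of a b] nprod_truncation[of b a]
    by (metis max.cobounded1 max.cobounded2 order.trans less_imp_le)
  define I where "I = {d..N}"
  define J where "J = {0..nat (N - d)}"
  have below_d: "fls_nth f i = 0" if "i < d" for i
    using that by (simp add: d_def)
  have outside_I: "i < d \<or> i > N" if "i \<notin> I" for i
    using that by (auto simp: I_def)
  have large: "nprod (i + 1 + int j) a b = 0" if "i \<in> I" "j \<notin> J" for i j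
    using that by (intro ab) (auto simp: I_def J_def)
  have skew_I: "nprod i a b + scale ((-1) powi i) (nprod i b a)
      = (\<Sum>j\<in>J. scale (s j) ((T ^^ (j + 1)) (nprod (i + 1 + int j) a b)))" if "i \<in> I" for i
    unfolding skew_symmetry s_def using large[OF that] by (intro fsum_eq_sum) (auto simp: J_def)
  have shifted_I: "fprod scale nprod (fls_X ^ (j + 1) * f) a b
      = (\<Sum>i\<in>I. scale (fls_nth f i) (nprod (i + 1 + int j) a b))" for j
  proof -
    have index: "i + int (j + 1) = i + 1 + int j" for i
      by simp
    show ?thesis
      unfolding fprod_X_power_times index using outside_I below_d ab
      by (intro fsum_eq_sum) (auto simp: I_def)
  qed
  have "fprod scale nprod f a b = (\<Sum>i\<in>I. scale (fls_nth f i) (nprod i a b))"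
    using outside_I below_d ab by (intro fprod_eq_sum) (auto simp: I_def)
  moreover have "fprod scale nprod (fls_compose_fps f (- fps_X)) b a
      = (\<Sum>i\<in>I. scale (fls_nth f i * (-1) powi i) (nprod i b a))"
    unfolding fls_nth_compose_neg_X[symmetric]
    using outside_I below_d ba by (intro fprod_eq_sum) (auto simp: I_def fls_nth_compose_neg_X)
  ultimately have "fprod scale nprod f a b + fprod scale nprod (fls_compose_fps f (- fps_X)) b a
      = (\<Sum>i\<in>I. scale (fls_nth f i) (nprod i a b + scale ((-1) powi i) (nprod i b a)))"
    by (simp add: sum.distrib scale_right_distrib)
  also have "\<dots> = (\<Sum>j\<in>J. scale (s j) ((T ^^ (j + 1))
                     (\<Sum>i\<in>I. scale (fls_nth f i) (nprod (i + 1 + int j) a b))))"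
  proof -
    have "(\<Sum>i\<in>I. scale (fls_nth f i) (nprod i a b + scale ((-1) powi i) (nprod i b a)))
        = (\<Sum>j\<in>J. \<Sum>i\<in>I. scale (s j) (scale (fls_nth f i)
             ((T ^^ (j + 1)) (nprod (i + 1 + int j) a b))))"
      by (simp add: skew_I scale_sum_right mult.commute sum.swap[of _ J I] del: funpow.simps)
    then show ?thesis
      by (simp only: T_power_sum T_power_scale scale_sum_right)
  qed
  also have "\<dots> = fsum (\<lambda>j. scale (s j) ((T ^^ (j + 1)) (fprod scale nprod (fls_X ^ (j + 1) * f) a b)))"
    unfolding shifted_I using large by (intro fsum_eq_sum[symmetric]) (auto simp: J_def)
  finally show ?thesis
    by (simp add: s_def)
qed

end

theorem lemma2p1:
  fixes scale :: "'k::field_char_0 \<Rightarrow> 'v::ab_group_add \<Rightarrow> 'v"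
    and nprod :: "int \<Rightarrow> 'v \<Rightarrow> 'v \<Rightarrow> 'v"
    and vac :: 'v
    and f :: "'k fls"
    and a b :: 'v
  assumes "vertex_algebra scale nprod vac"
  shows "fprod scale nprod f a b + fprod scale nprod (fls_compose_fps f (- fps_X)) b a
       = fsum (\<lambda>j::nat. scale ((-1) ^ j / fact (j + 1))
            ((transl nprod vac ^^ (j + 1)) (fprod scale nprod (fls_X ^ (j + 1) * f) a b)))"
proof -
  interpret vertex_alg scale nprod vac
    using assms by unfold_locales
  show ?thesis by (rule fprod_skew_symmetry)
qed

end
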